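(* Let $N > n$ and let $A$ be an $N \times n$ random matrix whose entries are independent random variables with absolutely continuous distributions. Then almost surely the following holds: for every $x \in S^{n-1}$ at which $\|Ax\|_1$ attains its minimum over $S^{n-1}$, the vector $Ax$ has exactly $N - n + 1$ nonzero coordinates.
   Context: $\|y\|_1 = \sum_j |y_j|$; $S^{n-1}$ is the Euclidean unit sphere in $\mathbb{R}^n$. *)

theory Defs
  imports "HOL-Probability.Probability"
begin

definition l1norm :: "real ^ 'm \<Rightarrow> real" where
  "l1norm y = (\<Sum>i\<in>UNIV. \<bar>y $ i\<bar>)"

end

theory Submission
  imports Defs
begin

text \<open>Almost surely every \<open>n \<times> n\<close> submatrix of \<open>A\<close> is nonsingular. Indeed, replace the rows of the
  identity matrix by rows of \<open>A\<close> one at a time: expanding along the new row, the determinant is affine in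
  each of its entries, with a cofactor that does not involve that entry; since the entry is independent
  of all others and has no atoms, the determinant vanishes only on a null event.

  For such an \<open>A\<close>, the vector \<open>A x\<close> (\<open>x \<noteq> 0\<close>) has fewer than \<open>n\<close> zero coordinates, since \<open>n\<close> of the rows
  would form an invertible matrix annihilating \<open>x\<close>. Conversely, if a minimiser \<open>x\<close> had fewer than
  \<open>n - 1\<close> zeros in \<open>A x\<close>, some \<open>e \<noteq> 0\<close> orthogonal to \<open>x\<close> and to the rows of those zeros exists. Along
  \<open>x + t e\<close> the l1 norm is affine for small \<open>t\<close>, so with the right sign of \<open>e\<close> it does not increase,
  while \<open>norm (x + t e) > 1\<close>; normalising back to the sphere then strictly decreases it.\<close>

lemma det_row_expansion_axis:
  fixes C :: "real^'n^'n"
  shows "det (\<chi> r. if r = k then v else C $ r)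
       = (\<Sum>j\<in>UNIV. v $ j * det (\<chi> r. if r = k then axis j 1 else C $ r))"
proof -
  have "(\<chi> r. if r = k then v else C $ r)
      = (\<chi> r. if r = k then (\<Sum>j\<in>UNIV. v $ j *s axis j 1) else C $ r)"
    by (simp only: basis_expansion)
  also have "det \<dots> = (\<Sum>j\<in>UNIV. det (\<chi> r. if r = k then v $ j *s axis j 1 else C $ r))"
    by (rule det_linear_row_sum[where a="\<lambda>i j. v $ j *s axis j 1"]) simp
  also have "\<dots> = (\<Sum>j\<in>UNIV. v $ j * det (\<chi> r. if r = k then axis j 1 else C $ r))"
    by (rule sum.cong[OF refl]) (rule det_row_mul)
  finally show ?thesis .
qed

lemma borel_measurable_det:
  fixes F :: "'b \<Rightarrow> real^'n^'n"
  assumes "\<And>i j. (\<lambda>y. F y $ i $ j) \<in> borel_measurable N"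
  shows "(\<lambda>y. det (F y)) \<in> borel_measurable N"
  unfolding det_def using assms
  by (intro borel_measurable_sum borel_measurable_prod borel_measurable_times borel_measurable_const) auto

lemma (in prob_space) emeasure_distr_level_set_eq_0:
  fixes f :: "'b \<Rightarrow> real"
  assumes X: "random_variable N X" and f: "f \<in> borel_measurable N"
    and ac: "absolutely_continuous lborel (distr M lborel (\<lambda>\<omega>. f (X \<omega>)))"
  shows "emeasure (distr M N X) {x \<in> space N. f x = c} = 0"
proof -
  have fX: "(\<lambda>\<omega>. f (X \<omega>)) \<in> borel_measurable M" using X f by simp
  have "{c} \<in> null_sets (distr M lborel (\<lambda>\<omega>. f (X \<omega>)))"
    using ac finite_imp_null_set_lborel[of "{c}"] unfolding absolutely_continuous_def by blast
  hence "emeasure M ((\<lambda>\<omega>. f (X \<omega>)) -` {c} \<inter> space M) = 0"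
    using fX by (simp add: emeasure_distr null_sets_def)
  moreover have "X -` {x \<in> space N. f x = c} \<inter> space M = (\<lambda>\<omega>. f (X \<omega>)) -` {c} \<inter> space M"
    using measurable_space[OF X] by auto
  ultimately show ?thesis
    using X f by (subst emeasure_distr) auto
qed

text \<open>By Fubini: for each fixed value of \<open>Y\<close> with \<open>h Y \<noteq> 0\<close> the equation pins \<open>f X\<close> to a single
  value, which \<open>f X\<close> hits with probability zero.\<close>

lemma (in prob_space) AE_indep_affine_nonzero:
  fixes f :: "'b \<Rightarrow> real"
  assumes ind: "indep_var N1 X N2 Y"
    and f: "f \<in> borel_measurable N1"
    and ac: "absolutely_continuous lborel (distr M lborel (\<lambda>\<omega>. f (X \<omega>)))"
    and h: "h \<in> borel_measurable N2" and g: "g \<in> borel_measurable N2"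
  shows "AE \<omega> in M. h (Y \<omega>) \<noteq> 0 \<longrightarrow> f (X \<omega>) * h (Y \<omega>) + g (Y \<omega>) \<noteq> 0"
proof -
  have X: "random_variable N1 X" and Y: "random_variable N2 Y"
    using ind by (auto simp: indep_var_distribution_eq)
  interpret P1: prob_space "distr M N1 X" by (rule prob_space_distr[OF X])
  interpret P2: prob_space "distr M N2 Y" by (rule prob_space_distr[OF Y])
  interpret PP: pair_sigma_finite "distr M N1 X" "distr M N2 Y" ..
  define S where "S = {p \<in> space (N1 \<Otimes>\<^sub>M N2). f (fst p) * h (snd p) + g (snd p) = 0 \<and> h (snd p) \<noteq> 0}"
  have S: "S \<in> sets (N1 \<Otimes>\<^sub>M N2)"
    unfolding S_def using h g f by measurable
  have "emeasure (distr M N1 X \<Otimes>\<^sub>M distr M N2 Y) S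
      = (\<integral>\<^sup>+y. emeasure (distr M N1 X) ((\<lambda>x. (x, y)) -` S) \<partial>distr M N2 Y)"
    by (rule PP.emeasure_pair_measure_alt2) (simp add: S)
  also have "\<dots> = (\<integral>\<^sup>+y. 0 \<partial>distr M N2 Y)"
  proof (rule nn_integral_cong)
    fix y
    have "(\<lambda>x. (x, y)) -` S \<subseteq> {x \<in> space N1. f x = - g y / h y}"
      by (auto simp: S_def field_simps space_pair_measure)
    hence "emeasure (distr M N1 X) ((\<lambda>x. (x, y)) -` S)
        \<le> emeasure (distr M N1 X) {x \<in> space N1. f x = - g y / h y}"
      using f by (intro emeasure_mono) auto
    thus "emeasure (distr M N1 X) ((\<lambda>x. (x, y)) -` S) = 0"
      using emeasure_distr_level_set_eq_0[OF X f ac] by simp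
  qed
  finally have "emeasure (distr M N1 X \<Otimes>\<^sub>M distr M N2 Y) S = 0" by simp
  hence "emeasure M ((\<lambda>\<omega>. (X \<omega>, Y \<omega>)) -` S \<inter> space M) = 0"
    using ind X Y S by (simp add: indep_var_distribution_eq emeasure_distr)
  moreover have "(\<lambda>\<omega>. (X \<omega>, Y \<omega>)) -` S \<inter> space M \<in> sets M"
    using X Y S by measurable
  ultimately show ?thesis
    by (intro AE_I'[where N="(\<lambda>\<omega>. (X \<omega>, Y \<omega>)) -` S \<inter> space M"])
       (auto simp: S_def space_pair_measure intro: measurable_space[OF Y] measurable_space[OF X])
qed

definition entries_except :: "'N \<times> 'n \<Rightarrow> real^'n^'N \<Rightarrow> 'N \<times> 'n \<Rightarrow> real" where
  "entries_except p B = restrict (\<lambda>q. B $ fst q $ snd q) (UNIV - {p})"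

definition matrix_of_entries_except :: "'N \<times> 'n \<Rightarrow> ('N \<times> 'n \<Rightarrow> real) \<Rightarrow> real^'n^'N" where
  "matrix_of_entries_except p y = (\<chi> i j. if (i, j) = p then 0 else y (i, j))"

lemma matrix_of_entries_except_nth:
  "matrix_of_entries_except p (entries_except p B) $ i $ j = (if (i, j) = p then 0 else B $ i $ j)"
  by (simp add: matrix_of_entries_except_def entries_except_def)

lemma borel_measurable_matrix_of_entries_except:
  "(\<lambda>y. matrix_of_entries_except p y $ i $ j) \<in> borel_measurable (PiM (UNIV - {p}) (\<lambda>_. borel))"
  by (cases "(i, j) = p") (auto simp: matrix_of_entries_except_def)

lemma (in prob_space) AE_affine_in_entry_nonzero:
  fixes A :: "'a \<Rightarrow> real^'n^'N" and h g :: "('N \<times> 'n \<Rightarrow> real) \<Rightarrow> real"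
  assumes ind: "indep_vars (\<lambda>_. borel) (\<lambda>(i, j) \<omega>. A \<omega> $ i $ j) UNIV"
    and ac: "absolutely_continuous lborel (distr M lborel (\<lambda>\<omega>. A \<omega> $ i $ j))"
    and h: "h \<in> borel_measurable (PiM (UNIV - {(i, j)}) (\<lambda>_. borel))"
    and g: "g \<in> borel_measurable (PiM (UNIV - {(i, j)}) (\<lambda>_. borel))"
  shows "AE \<omega> in M. h (entries_except (i, j) (A \<omega>)) \<noteq> 0 \<longrightarrow>
           A \<omega> $ i $ j * h (entries_except (i, j) (A \<omega>)) + g (entries_except (i, j) (A \<omega>)) \<noteq> 0"
proof -
  have entries: "(\<lambda>(i, j) \<omega>. A \<omega> $ i $ j) = (\<lambda>q \<omega>. A \<omega> $ fst q $ snd q)"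
    by (simp add: case_prod_beta')
  define X where "X \<omega> = restrict (\<lambda>q. A \<omega> $ fst q $ snd q) {(i, j)}" for \<omega>
  have "indep_var (PiM {(i, j)} (\<lambda>_. borel)) X
          (PiM (UNIV - {(i, j)}) (\<lambda>_. borel)) (\<lambda>\<omega>. entries_except (i, j) (A \<omega>))"
    unfolding entries_except_def X_def by (rule indep_var_restrict[OF ind[unfolded entries]]) auto
  moreover have "(\<lambda>y. y (i, j)) \<in> borel_measurable (PiM {(i, j)} (\<lambda>_. borel))"
    by (rule measurable_component_singleton) simp
  moreover have "absolutely_continuous lborel (distr M lborel (\<lambda>\<omega>. X \<omega> (i, j)))"
    using ac by (simp add: X_def)
  ultimately have "AE \<omega> in M. h (entries_except (i, j) (A \<omega>)) \<noteq> 0 \<longrightarrow>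
      X \<omega> (i, j) * h (entries_except (i, j) (A \<omega>)) + g (entries_except (i, j) (A \<omega>)) \<noteq> 0"
    by (rule AE_indep_affine_nonzero[OF _ _ _ h g])
  then show ?thesis by (simp add: X_def)
qed

lemma (in prob_space) AE_row_expansion_nonzero:
  fixes A :: "'a \<Rightarrow> real^'n^'N" and \<sigma> :: "'n \<Rightarrow> 'N" and D :: "real^'n^'n"
  assumes ind: "indep_vars (\<lambda>_. borel) (\<lambda>(i, j) \<omega>. A \<omega> $ i $ j) UNIV"
    and ac: "\<And>i j. absolutely_continuous lborel (distr M lborel (\<lambda>\<omega>. A \<omega> $ i $ j))"
    and \<sigma>: "inj \<sigma>" and k: "k \<notin> R"
  defines "c j \<omega> \<equiv> det (\<chi> r. if r = k then axis j 1 else if r \<in> R then A \<omega> $ \<sigma> r else D $ r)"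
  shows "AE \<omega> in M. (\<exists>j. c j \<omega> \<noteq> 0) \<longrightarrow> (\<Sum>j\<in>UNIV. A \<omega> $ \<sigma> k $ j * c j \<omega>) \<noteq> 0"
proof -
  have "AE \<omega> in M. \<forall>j\<in>UNIV. c j \<omega> \<noteq> 0 \<longrightarrow>
          A \<omega> $ \<sigma> k $ j * c j \<omega> + (\<Sum>j'\<in>UNIV - {j}. A \<omega> $ \<sigma> k $ j' * c j' \<omega>) \<noteq> 0"
  proof (rule AE_finite_allI, simp)
    fix j :: 'n
    define p where "p = (\<sigma> k, j)"
    define H where "H j' y = det (\<chi> r. if r = k then axis j' 1
        else if r \<in> R then matrix_of_entries_except p y $ \<sigma> r else D $ r)" for j' y
    define G where "G y = (\<Sum>j'\<in>UNIV - {j}. matrix_of_entries_except p y $ \<sigma> k $ j' * H j' y)" for y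
    text \<open>As \<open>k \<notin> R\<close> and \<open>\<sigma>\<close> is injective, no cofactor reads the entry \<open>p\<close>.\<close>
    have H: "H j' (entries_except p (A \<omega>)) = c j' \<omega>" for j' \<omega>
      unfolding H_def c_def using \<sigma> k
      by (intro arg_cong[where f=det]) (auto simp: vec_eq_iff matrix_of_entries_except_nth p_def inj_eq)
    have G: "G (entries_except p (A \<omega>)) = (\<Sum>j'\<in>UNIV - {j}. A \<omega> $ \<sigma> k $ j' * c j' \<omega>)" for \<omega>
      unfolding G_def by (intro sum.cong) (auto simp: matrix_of_entries_except_nth H[unfolded p_def] p_def)
    have H_meas: "H j' \<in> borel_measurable (PiM (UNIV - {p}) (\<lambda>_. borel))" for j'
      unfolding H_def
    proof (rule borel_measurable_det)
      fix r l
      show "(\<lambda>y. (\<chi> r. if r = k then axis j' 1 else if r \<in> R then matrix_of_entries_except p y $ \<sigma> r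
                  else D $ r) $ r $ l) \<in> borel_measurable (PiM (UNIV - {p}) (\<lambda>_. borel))"
        by (cases "r = k"; cases "r \<in> R") (simp_all add: borel_measurable_matrix_of_entries_except)
    qed
    have G_meas: "G \<in> borel_measurable (PiM (UNIV - {p}) (\<lambda>_. borel))"
      unfolding G_def
      by (intro borel_measurable_sum borel_measurable_times H_meas
          borel_measurable_matrix_of_entries_except)
    show "AE \<omega> in M. c j \<omega> \<noteq> 0 \<longrightarrow>
            A \<omega> $ \<sigma> k $ j * c j \<omega> + (\<Sum>j'\<in>UNIV - {j}. A \<omega> $ \<sigma> k $ j' * c j' \<omega>) \<noteq> 0"
      using AE_affine_in_entry_nonzero[OF ind ac H_meas[unfolded p_def] G_meas[unfolded p_def]]
      by (simp add: H[unfolded p_def] G[unfolded p_def])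
  qed
  then show ?thesis
  proof eventually_elim
    case (elim \<omega>)
    show ?case
    proof
      assume "\<exists>j. c j \<omega> \<noteq> 0"
      then obtain j where "c j \<omega> \<noteq> 0" by blast
      with elim show "(\<Sum>j\<in>UNIV. A \<omega> $ \<sigma> k $ j * c j \<omega>) \<noteq> 0"
        by (simp add: sum.remove[of UNIV j])
    qed
  qed
qed

lemma (in prob_space) AE_det_replace_rows_nonzero:
  fixes A :: "'a \<Rightarrow> real^'n^'N" and \<sigma> :: "'n \<Rightarrow> 'N" and D :: "real^'n^'n"
  assumes ind: "indep_vars (\<lambda>_. borel) (\<lambda>(i, j) \<omega>. A \<omega> $ i $ j) UNIV"
    and ac: "\<And>i j. absolutely_continuous lborel (distr M lborel (\<lambda>\<omega>. A \<omega> $ i $ j))"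
    and \<sigma>: "inj \<sigma>" and D: "det D \<noteq> 0"
  shows "AE \<omega> in M. det (\<chi> r. if r \<in> R then A \<omega> $ \<sigma> r else D $ r) \<noteq> 0"
proof -
  have "finite R" by simp
  then show ?thesis
  proof (induction R rule: finite_induct)
    case empty
    then show ?case using D by simp
  next
    case (insert k R)
    define C where "C \<omega> = (\<chi> r. if r \<in> R then A \<omega> $ \<sigma> r else D $ r)" for \<omega>
    define c where "c j \<omega> = det (\<chi> r. if r = k then axis j 1 else if r \<in> R then A \<omega> $ \<sigma> r else D $ r)"
      for j \<omega>
    have row_k: "(\<chi> r. if r = k then v else C \<omega> $ r)
        = (\<chi> r. if r = k then v else if r \<in> R then A \<omega> $ \<sigma> r else D $ r)" for v \<omega>
      by (simp add: C_def vec_eq_iff)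
    have expand_new: "det (\<chi> r. if r \<in> insert k R then A \<omega> $ \<sigma> r else D $ r)
        = (\<Sum>j\<in>UNIV. A \<omega> $ \<sigma> k $ j * c j \<omega>)" for \<omega>
    proof -
      have "det (\<chi> r. if r \<in> insert k R then A \<omega> $ \<sigma> r else D $ r)
          = det (\<chi> r. if r = k then A \<omega> $ \<sigma> k else C \<omega> $ r)"
        by (rule arg_cong[where f=det]) (simp add: C_def vec_eq_iff)
      also have "\<dots> = (\<Sum>j\<in>UNIV. A \<omega> $ \<sigma> k $ j * det (\<chi> r. if r = k then axis j 1 else C \<omega> $ r))"
        by (rule det_row_expansion_axis)
      finally show ?thesis
        by (simp only: c_def row_k)
    qed
    have expand_old: "det (C \<omega>) = (\<Sum>j\<in>UNIV. D $ k $ j * c j \<omega>)" for \<omega>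
    proof -
      have "C \<omega> = (\<chi> r. if r = k then D $ k else C \<omega> $ r)"
        using insert.hyps(2) by (simp add: C_def vec_eq_iff)
      then have "det (C \<omega>) = det (\<chi> r. if r = k then D $ k else C \<omega> $ r)"
        by (rule arg_cong)
      also have "\<dots> = (\<Sum>j\<in>UNIV. D $ k $ j * det (\<chi> r. if r = k then axis j 1 else C \<omega> $ r))"
        by (rule det_row_expansion_axis)
      finally show ?thesis
        by (simp only: c_def row_k)
    qed
    have "AE \<omega> in M. \<exists>j. c j \<omega> \<noteq> 0"
      using insert.IH
    proof eventually_elim
      case (elim \<omega>)
      then have "det (C \<omega>) \<noteq> 0" by (simp add: C_def)
      then show ?case
        unfolding expand_old by (metis (mono_tags) mult_zero_right sum.neutral)
    qed
    with AE_row_expansion_nonzero[OF ind ac \<sigma> insert.hyps(2), of D] show ?case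
    proof eventually_elim
      case (elim \<omega>)
      then show ?case
        unfolding expand_new c_def by blast
    qed
  qed
qed

lemma (in prob_space) AE_square_submatrices_nonsingular:
  fixes A :: "'a \<Rightarrow> real^'n^'N"
  assumes ind: "indep_vars (\<lambda>_. borel) (\<lambda>(i, j) \<omega>. A \<omega> $ i $ j) UNIV"
    and ac: "\<And>i j. absolutely_continuous lborel (distr M lborel (\<lambda>\<omega>. A \<omega> $ i $ j))"
  shows "AE \<omega> in M. \<forall>\<sigma>::'n \<Rightarrow> 'N. inj \<sigma> \<longrightarrow> det (\<chi> r. A \<omega> $ \<sigma> r) \<noteq> 0"
proof -
  have "AE \<omega> in M. \<forall>\<sigma>\<in>{\<sigma>::'n \<Rightarrow> 'N. inj \<sigma>}. det (\<chi> r. A \<omega> $ \<sigma> r) \<noteq> 0"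
    using AE_det_replace_rows_nonzero[OF ind ac, of _ "mat 1" UNIV] by (intro AE_finite_allI) auto
  then show ?thesis by simp
qed

lemma l1norm_scaleR: "l1norm (c *\<^sub>R y) = \<bar>c\<bar> * l1norm y"
  by (simp add: l1norm_def sum_distrib_left abs_mult)

lemma l1norm_pos:
  assumes "y \<noteq> 0"
  shows "l1norm y > 0"
proof -
  obtain i where "y $ i \<noteq> 0"
    using assms by (auto simp: vec_eq_iff)
  moreover have "\<bar>y $ i\<bar> \<le> l1norm y"
    unfolding l1norm_def by (rule member_le_sum) auto
  ultimately show ?thesis by simp
qed

lemma l1norm_add_small_eq:
  fixes a b :: "real^'m"
  assumes zeros: "\<And>i. a $ i = 0 \<Longrightarrow> b $ i = 0"
  obtains t where "t > 0" "l1norm (a + t *\<^sub>R b) = l1norm a + t * (\<Sum>i\<in>UNIV. sgn (a $ i) * b $ i)"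
proof -
  define t where "t = Min (insert 1 {\<bar>a $ i\<bar> / (\<bar>b $ i\<bar> + 1) |i. a $ i \<noteq> 0})"
  have t_pos: "t > 0"
    unfolding t_def by (subst Min_gr_iff) auto
  have small: "t * \<bar>b $ i\<bar> < \<bar>a $ i\<bar>" if "a $ i \<noteq> 0" for i
  proof -
    have "t \<le> \<bar>a $ i\<bar> / (\<bar>b $ i\<bar> + 1)"
      unfolding t_def using that by (intro Min_le) auto
    then have "t * (\<bar>b $ i\<bar> + 1) \<le> \<bar>a $ i\<bar>"
      by (simp add: field_simps)
    then show ?thesis using t_pos by (simp add: algebra_simps)
  qed
  have "\<bar>a $ i + t * b $ i\<bar> = \<bar>a $ i\<bar> + t * (sgn (a $ i) * b $ i)" for i
  proof (cases "a $ i = 0")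
    case True
    then show ?thesis using zeros by simp
  next
    case False
    have "\<bar>t * b $ i\<bar> < \<bar>a $ i\<bar>"
      using small[OF False] t_pos by (simp add: abs_mult)
    with False show ?thesis
      by (cases "a $ i > 0") (auto simp: sgn_if abs_if split: if_split_asm)
  qed
  then have "l1norm (a + t *\<^sub>R b) = l1norm a + t * (\<Sum>i\<in>UNIV. sgn (a $ i) * b $ i)"
    by (simp add: l1norm_def sum.distrib sum_distrib_left)
  with t_pos show ?thesis by (rule that)
qed

lemma l1_minimizer_less_outside_sphere:
  fixes A :: "real^'n^'m"
  assumes x: "norm x = 1"
    and min: "\<forall>y. norm y = 1 \<longrightarrow> l1norm (A *v x) \<le> l1norm (A *v y)"
    and Ax: "A *v x \<noteq> 0" and v: "norm v > 1"
  shows "l1norm (A *v x) < l1norm (A *v v)"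
proof -
  have "norm ((1 / norm v) *\<^sub>R v) = 1"
    using v by force
  with min have "l1norm (A *v x) \<le> l1norm (A *v ((1 / norm v) *\<^sub>R v))"
    by blast
  also have "\<dots> = l1norm (A *v v) / norm v"
    using v by (simp add: matrix_vector_mult_scaleR l1norm_scaleR)
  finally have "l1norm (A *v x) * norm v \<le> l1norm (A *v v)"
    using v by (subst (asm) pos_le_divide_eq) auto
  moreover have "l1norm (A *v x) < l1norm (A *v x) * norm v"
    using l1norm_pos[OF Ax] v by simp
  ultimately show ?thesis by simp
qed

lemma l1_minimizer_card_zero_coords_ge:
  fixes A :: "real^'n^'m"
  assumes x: "norm x = 1"
    and min: "\<forall>y. norm y = 1 \<longrightarrow> l1norm (A *v x) \<le> l1norm (A *v y)"
    and Ax: "A *v x \<noteq> 0"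
  shows "CARD('n) \<le> card {i. (A *v x) $ i = 0} + 1"
proof (rule ccontr)
  define a where "a = A *v x"
  define Z where "Z = {i. a $ i = 0}"
  define S where "S = insert x ((\<lambda>i. A $ i) ` Z)"
  assume "\<not> CARD('n) \<le> card {i. (A *v x) $ i = 0} + 1"
  then have "card S < DIM(real^'n)"
    unfolding S_def a_def[symmetric] Z_def[symmetric]
    using card_insert_le_m1 card_image_le[of Z "\<lambda>i. A $ i"] by (auto simp: card_insert_if)
  moreover have "dim S \<le> card S"
    by (rule dim_le_card') (simp add: S_def)
  ultimately have "dim S < DIM(real^'n)"
    by linarith
  then obtain d where "d \<noteq> 0" and d: "\<And>y. y \<in> span S \<Longrightarrow> orthogonal d y"
    using orthogonal_to_subspace_exists by metis
  text \<open>Choose the sign of \<open>d\<close> so that moving along it does not increase the l1 norm to first order.\<close>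
  obtain e where "e \<noteq> 0" and e: "e \<in> {d, - d}"
    and descent: "(\<Sum>i\<in>UNIV. sgn (a $ i) * (A *v e) $ i) \<le> 0"
  proof (cases "(\<Sum>i\<in>UNIV. sgn (a $ i) * (A *v d) $ i) \<le> 0")
    case True
    with \<open>d \<noteq> 0\<close> show ?thesis by (intro that[of d]) auto
  next
    case False
    with \<open>d \<noteq> 0\<close> show ?thesis
      by (intro that[of "- d"]) (auto simp: vec.neg sum_negf)
  qed
  have "x \<bullet> e = 0"
    using d[of x] e by (auto simp: S_def span_base orthogonal_def inner_commute)
  have "(A *v e) $ i = 0" if "a $ i = 0" for i
    using d[of "A $ i"] e that
    by (auto simp: S_def Z_def span_base orthogonal_def matrix_vector_mul_component inner_commute)
  then obtain t where "t > 0"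
    and t: "l1norm (a + t *\<^sub>R (A *v e)) = l1norm a + t * (\<Sum>i\<in>UNIV. sgn (a $ i) * (A *v e) $ i)"
    by (rule l1norm_add_small_eq)
  define v where "v = x + t *\<^sub>R e"
  have "l1norm (A *v v) \<le> l1norm (A *v x)"
    using t \<open>t > 0\<close> descent
    by (simp add: v_def a_def matrix_vector_right_distrib matrix_vector_mult_scaleR mult_nonneg_nonpos)
  moreover have "(norm v)\<^sup>2 = 1 + (t * norm e)\<^sup>2"
    using \<open>x \<bullet> e = 0\<close> x \<open>t > 0\<close> by (simp add: v_def norm_add_Pythagorean orthogonal_def)
  then have "1 ^ 2 < (norm v)\<^sup>2"
    using \<open>e \<noteq> 0\<close> \<open>t > 0\<close> by simp
  then have "norm v > 1"
    by (rule power_less_imp_less_base) simp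
  ultimately show False
    using l1_minimizer_less_outside_sphere[OF x min Ax] by (simp add: not_less[symmetric])
qed

lemma card_zero_coords_less:
  fixes A :: "real^'n^'m"
  assumes nonsingular: "\<And>\<sigma>::'n \<Rightarrow> 'm. inj \<sigma> \<Longrightarrow> det (\<chi> r. A $ \<sigma> r) \<noteq> 0"
    and "x \<noteq> 0"
  shows "card {i. (A *v x) $ i = 0} < CARD('n)"
proof (rule ccontr)
  assume "\<not> card {i. (A *v x) $ i = 0} < CARD('n)"
  then obtain S where S: "S \<subseteq> {i. (A *v x) $ i = 0}" "card S = CARD('n)"
    by (meson obtain_subset_with_card_n not_less)
  then obtain \<sigma> where \<sigma>: "bij_betw \<sigma> (UNIV :: 'n set) S"
    by (metis finite_same_card_bij finite)
  define B where "B = (\<chi> r. A $ \<sigma> r)"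
  have "A $ \<sigma> r \<bullet> x = 0" for r
    using S(1) bij_betwE[OF \<sigma>] by (auto simp: matrix_vector_mul_component)
  then have "B *v x = B *v 0"
    by (simp add: vec_eq_iff B_def matrix_vector_mul_component)
  moreover have "invertible B"
    using nonsingular \<sigma> by (simp add: B_def invertible_det_nz bij_betw_def)
  ultimately show False
    using \<open>x \<noteq> 0\<close> inj_matrix_vector_mult by (metis injD)
qed

lemma l1_minimizer_card_nonzero_coords:
  fixes A :: "real^'n^'m"
  assumes nonsingular: "\<And>\<sigma>::'n \<Rightarrow> 'm. inj \<sigma> \<Longrightarrow> det (\<chi> r. A $ \<sigma> r) \<noteq> 0"
    and tall: "CARD('m) > CARD('n)"
    and x: "norm x = 1"
    and min: "\<forall>y. norm y = 1 \<longrightarrow> l1norm (A *v x) \<le> l1norm (A *v y)"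
  shows "card {i. (A *v x) $ i \<noteq> 0} = CARD('m) - CARD('n) + 1"
proof -
  let ?Z = "{i. (A *v x) $ i = 0}"
  have less: "card ?Z < CARD('n)"
    using x by (intro card_zero_coords_less[OF nonsingular]) auto
  then have "?Z \<noteq> UNIV"
    using tall by auto
  then have "A *v x \<noteq> 0"
    by auto
  then have "CARD('n) \<le> card ?Z + 1"
    using l1_minimizer_card_zero_coords_ge[OF x min] by simp
  moreover have "{i. (A *v x) $ i \<noteq> 0} = UNIV - ?Z" by auto
  ultimately show ?thesis
    using less tall by (simp add: card_Diff_subset)
qed

theorem lemma8p3:
  fixes M :: "'w measure"
    and A :: "'w \<Rightarrow> real ^ 'n ^ 'N"
  assumes "prob_space M"
    and "CARD('N) > CARD('n)"
    and "prob_space.indep_vars M (\<lambda>_. borel) (\<lambda>(i, j) \<omega>. A \<omega> $ i $ j) UNIV"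
    and "\<And>i j. absolutely_continuous lborel (distr M lborel (\<lambda>\<omega>. A \<omega> $ i $ j))"
  shows "AE \<omega> in M. \<forall>x :: real ^ 'n. norm x = 1 \<and>
            (\<forall>y :: real ^ 'n. norm y = 1 \<longrightarrow> l1norm (A \<omega> *v x) \<le> l1norm (A \<omega> *v y))
          \<longrightarrow> card {i. (A \<omega> *v x) $ i \<noteq> 0} = CARD('N) - CARD('n) + 1"
proof -
  interpret prob_space M by (rule assms(1))
  from AE_square_submatrices_nonsingular[OF assms(3,4)] show ?thesis
    by eventually_elim (use l1_minimizer_card_nonzero_coords assms(2) in blast)
qed

end
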